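(* There exist no cones in $\mathbb{R}^3$ with proper biharmonic Gauss map. That is, for every curve $\sigma:I\to\mathbb{S}^2$ parametrized by arc length, the Gauss map of the cone $(0,\infty)\times I\to\mathbb{R}^3$, $(t,s)\mapsto t\,\sigma(s)$, is not proper biharmonic.
   Context: The cone over $\sigma$ is an immersed surface in $\mathbb{R}^3$ with induced metric $dt^2+t^2ds^2$, oriented by the unit normal $N(s)$ of $\sigma$ in $\mathbb{S}^2$. Its Gauss map sends a point to its oriented tangent plane in the Grassmannian of oriented 2-planes in $\mathbb{R}^3$ with the standard metric (identify $T_PG=P^*\otimes P^\perp$, declaring $\{e_i^*\otimes e_3\}$ orthonormal). A map with tension field $\tau(\phi)=\operatorname{trace}\nabla d\phi$ is biharmonic if $-\Delta\tau(\phi)-\operatorname{trace}R^N(d\phi,\tau(\phi))d\phi=0$ ($\Delta=-\operatorname{trace}(\nabla^\phi)^2$, $R^N(X,Y)=\nabla_X\nabla_Y-\nabla_Y\nabla_X-\nabla_{[X,Y]}$), harmonic if $\tau(\phi)=0$, and proper biharmonic if biharmonic but not harmonic. *)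

theory Defs
  imports "HOL-Analysis.Analysis" "HOL-Analysis.Cross3"
begin

fun vderiv :: "nat \<Rightarrow> (real \<Rightarrow> 'a::real_normed_vector) \<Rightarrow> real \<Rightarrow> 'a" where
  "vderiv 0 f = f"
| "vderiv (Suc n) f = (\<lambda>s. vector_derivative (vderiv n f) (at s))"

definition smooth_on :: "real set \<Rightarrow> (real \<Rightarrow> 'a::real_normed_vector) \<Rightarrow> bool" where
  "smooth_on I f \<longleftrightarrow> (\<forall>n. \<forall>s\<in>I. (vderiv n f has_vector_derivative vderiv (Suc n) f s) (at s))"

definition pd :: "nat \<Rightarrow> (real \<times> real \<Rightarrow> 'a::real_normed_vector) \<Rightarrow> real \<times> real \<Rightarrow> 'a" where
  "pd i F p = vector_derivative (\<lambda>h. F (p + (if i = 1 then (h, 0) else (0, h)))) (at 0)"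

type_synonym metric2 = "nat \<Rightarrow> nat \<Rightarrow> real \<times> real \<Rightarrow> real"

definition induced_metric :: "(real \<times> real \<Rightarrow> real^3) \<Rightarrow> metric2" where
  "induced_metric X i j p = pd i X p \<bullet> pd j X p"

definition metric_det :: "metric2 \<Rightarrow> real \<times> real \<Rightarrow> real" where
  "metric_det g p = g 1 1 p * g 2 2 p - g 1 2 p * g 2 1 p"

definition ginv :: "metric2 \<Rightarrow> metric2" where
  "ginv g i j p =
     (if i = 1 \<and> j = 1 then g 2 2 p
      else if i = 2 \<and> j = 2 then g 1 1 p
      else - g i j p) / metric_det g p"

definition christ :: "metric2 \<Rightarrow> nat \<Rightarrow> nat \<Rightarrow> nat \<Rightarrow> real \<times> real \<Rightarrow> real" where
  "christ g k i j p = (1/2) * (\<Sum>l\<in>{1,2}. ginv g k l p *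
       (pd i (g j l) p + pd j (g i l) p - pd l (g i j) p))"

text \<open>Pull-back of the Levi-Civita connection of the unit sphere along phi, applied to a
  section V along phi: tangential projection of the ambient derivative (Gauss formula).\<close>
definition cov :: "nat \<Rightarrow> (real \<times> real \<Rightarrow> real^3) \<Rightarrow> (real \<times> real \<Rightarrow> real^3)
                    \<Rightarrow> real \<times> real \<Rightarrow> real^3" where
  "cov i \<phi> V p = pd i V p - (pd i V p \<bullet> \<phi> p) *\<^sub>R \<phi> p"

text \<open>Riemann curvature tensor of the unit sphere S^2 with the convention
  R(X,Y) = nabla_X nabla_Y - nabla_Y nabla_X - nabla_[X,Y].\<close>
definition curvS2 :: "real^3 \<Rightarrow> real^3 \<Rightarrow> real^3 \<Rightarrow> real^3" where
  "curvS2 X Y Z = (Y \<bullet> Z) *\<^sub>R X - (X \<bullet> Z) *\<^sub>R Y"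

definition tension :: "metric2 \<Rightarrow> (real \<times> real \<Rightarrow> real^3) \<Rightarrow> real \<times> real \<Rightarrow> real^3" where
  "tension g \<phi> p = (\<Sum>i\<in>{1,2}. \<Sum>j\<in>{1,2}. ginv g i j p *\<^sub>R
       (cov i \<phi> (pd j \<phi>) p - (\<Sum>k\<in>{1,2}. christ g k i j p *\<^sub>R pd k \<phi> p)))"

text \<open>trace (nabla^phi)^2 V  (= - Delta V with the rough Laplacian Delta = - trace (nabla^phi)^2).\<close>
definition trace_hess :: "metric2 \<Rightarrow> (real \<times> real \<Rightarrow> real^3) \<Rightarrow> (real \<times> real \<Rightarrow> real^3)
                          \<Rightarrow> real \<times> real \<Rightarrow> real^3" where
  "trace_hess g \<phi> V p = (\<Sum>i\<in>{1,2}. \<Sum>j\<in>{1,2}. ginv g i j p *\<^sub>R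
       (cov i \<phi> (cov j \<phi> V) p - (\<Sum>k\<in>{1,2}. christ g k i j p *\<^sub>R cov k \<phi> V p)))"

definition bitension :: "metric2 \<Rightarrow> (real \<times> real \<Rightarrow> real^3) \<Rightarrow> real \<times> real \<Rightarrow> real^3" where
  "bitension g \<phi> p = trace_hess g \<phi> (tension g \<phi>) p
     - (\<Sum>i\<in>{1,2}. \<Sum>j\<in>{1,2}. ginv g i j p *\<^sub>R curvS2 (pd i \<phi> p) (tension g \<phi> p) (pd j \<phi> p))"

definition harmonic_on :: "metric2 \<Rightarrow> (real \<times> real \<Rightarrow> real^3) \<Rightarrow> (real \<times> real) set \<Rightarrow> bool" where
  "harmonic_on g \<phi> U \<longleftrightarrow> (\<forall>p\<in>U. tension g \<phi> p = 0)"

definition biharmonic_on :: "metric2 \<Rightarrow> (real \<times> real \<Rightarrow> real^3) \<Rightarrow> (real \<times> real) set \<Rightarrow> bool" where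
  "biharmonic_on g \<phi> U \<longleftrightarrow> (\<forall>p\<in>U. bitension g \<phi> p = 0)"

definition proper_biharmonic_on :: "metric2 \<Rightarrow> (real \<times> real \<Rightarrow> real^3) \<Rightarrow> (real \<times> real) set \<Rightarrow> bool" where
  "proper_biharmonic_on g \<phi> U \<longleftrightarrow> biharmonic_on g \<phi> U \<and> \<not> harmonic_on g \<phi> U"

definition cone :: "(real \<Rightarrow> real^3) \<Rightarrow> real \<times> real \<Rightarrow> real^3" where
  "cone \<sigma> p = fst p *\<^sub>R \<sigma> (snd p)"

text \<open>Gauss map of an immersed surface X(x1,x2), oriented by the frame (d_1 X, d_2 X),
  with the Grassmannian of oriented 2-planes in R^3 identified isometrically with the unit
  sphere S^2 via the oriented unit normal.\<close>
definition gauss_map :: "(real \<times> real \<Rightarrow> real^3) \<Rightarrow> real \<times> real \<Rightarrow> real^3" where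
  "gauss_map X p = (1 / norm (cross3 (pd 1 X p) (pd 2 X p))) *\<^sub>R cross3 (pd 1 X p) (pd 2 X p)"

end

theory Submission imports Defs begin

text \<open>
  The Gauss map of the cone over \<sigma> is the unit normal N(s) of \<sigma> in S^2; it is constant
  along the rulings. In the Sabban frame (\<sigma>, \<sigma>', N), with \<sigma>'' = \<kappa> N - \<sigma> and N' = -\<kappa> \<sigma>',
  the tension field is t^(-2) (\<kappa> \<sigma> - \<kappa>' \<sigma>'), and at t = 1 the bitension field is
  (3\<kappa> + 3\<kappa>'' + \<kappa>^3) \<sigma> - (\<kappa>' + \<kappa>''') \<sigma>'. Differentiating the first coefficient and subtracting
  the second gives \<kappa>^2 \<kappa>' = 0, so \<kappa> is locally constant where it does not vanish; there
  \<kappa>(3 + \<kappa>^2) = 0, a contradiction. Hence \<kappa> = 0, and the Gauss map is harmonic.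
\<close>

text \<open>Keeps the coordinate indices of \<open>pd\<close>, \<open>ginv\<close> and \<open>christ\<close> as numerals.\<close>
declare One_nat_def[simp del]

lemma cross_cross_right: "cross3 x (cross3 y z) = (x \<bullet> z) *\<^sub>R y - (x \<bullet> y) *\<^sub>R z" for x y z :: "real^3"
  unfolding vec_eq_iff forall_3 by (simp add: cross3_def inner_vec_def sum_3 algebra_simps)

lemma bounded_bilinear_cross: "bounded_bilinear (cross3 :: real^3 \<Rightarrow> real^3 \<Rightarrow> real^3)"
  using bilinear_conv_bounded_bilinear bilinear_cross by blast

lemma orthonormal_cross_expansion:
  fixes a b v :: "real^3"
  assumes aa: "a \<bullet> a = 1" and bb: "b \<bullet> b = 1" and ab: "a \<bullet> b = 0"
  shows "v = (v \<bullet> a) *\<^sub>R a + (v \<bullet> b) *\<^sub>R b + (v \<bullet> (cross3 a b)) *\<^sub>R (cross3 a b)"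
proof -
  define N where "N = cross3 a b"
  have NN: "N \<bullet> N = 1"
    using norm_cross_dot[of a b] aa bb ab unfolding N_def
    by (simp add: dot_square_norm[symmetric] power2_eq_square norm_eq_sqrt_inner)
  have aN: "a \<bullet> N = 0" "b \<bullet> N = 0" unfolding N_def using dot_cross_self by auto
  define w where "w = v - ((v \<bullet> a) *\<^sub>R a + (v \<bullet> b) *\<^sub>R b + (v \<bullet> N) *\<^sub>R N)"
  have "b \<bullet> a = 0" "N \<bullet> a = 0" "N \<bullet> b = 0" using ab aN by (simp_all add: inner_commute)
  then have w: "w \<bullet> a = 0" "w \<bullet> b = 0" "w \<bullet> N = 0"
    unfolding w_def using aa bb ab aN NN by (simp_all add: inner_diff_left inner_add_left)
  have "cross3 w N = 0"
    using cross_cross_right[of w a b] w unfolding N_def by (simp add: inner_commute)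
  then have "w = 0"
    using cross_cross_right[of N w N] NN w by (simp add: inner_commute)
  then show ?thesis unfolding w_def N_def by (simp add: algebra_simps)
qed

lemma has_field_derivative_inner:
  fixes f g :: "real \<Rightarrow> 'a::real_inner"
  assumes "(f has_vector_derivative f') (at x)" "(g has_vector_derivative g') (at x)"
  shows "((\<lambda>x. f x \<bullet> g x) has_field_derivative (f' \<bullet> g x + f x \<bullet> g')) (at x)"
  using bounded_bilinear.has_vector_derivative[OF bounded_bilinear_inner assms]
  by (simp add: has_real_derivative_iff_has_vector_derivative add.commute)

lemma has_field_derivative_zero_if_constant_on_open:
  fixes f :: "real \<Rightarrow> real"
  assumes "open W" "x \<in> W" "\<And>y. y \<in> W \<Longrightarrow> f y = c" "(f has_field_derivative D) (at x)"
  shows "D = 0"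
proof -
  have "(f has_field_derivative 0) (at x)"
    by (rule has_field_derivative_transform_within_open[of "\<lambda>_. c" 0 x W]) (use assms in auto)
  then show ?thesis using assms(4) DERIV_unique by blast
qed

definition derivative_tower :: "real set \<Rightarrow> (nat \<Rightarrow> real \<Rightarrow> 'a::real_normed_vector) \<Rightarrow> bool" where
  "derivative_tower I F \<longleftrightarrow> (\<forall>n. \<forall>s\<in>I. (F n has_vector_derivative F (Suc n) s) (at s))"

lemma smooth_on_iff_derivative_tower: "smooth_on I f \<longleftrightarrow> derivative_tower I (\<lambda>n. vderiv n f)"
  by (simp add: smooth_on_def derivative_tower_def)

lemma derivative_tower_shift: "derivative_tower I F \<Longrightarrow> derivative_tower I (\<lambda>n. F (n + m))"
  by (simp add: derivative_tower_def)

lemma derivative_tower_field_derivative: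
  "derivative_tower I F \<Longrightarrow> s \<in> I \<Longrightarrow> (F n has_field_derivative F (Suc n) s) (at s)"
  by (simp add: derivative_tower_def has_real_derivative_iff_has_vector_derivative)

lemma binomial_shift_sum:
  fixes h :: "nat \<Rightarrow> 'a::real_vector"
  shows "(\<Sum>j\<le>n. of_nat (n choose j) *\<^sub>R (h (Suc j) + h j)) = (\<Sum>j\<le>Suc n. of_nat (Suc n choose j) *\<^sub>R h j)"
proof -
  have "(\<Sum>j\<le>Suc n. of_nat (Suc n choose j) *\<^sub>R h j)
      = (\<Sum>j\<le>n. of_nat (n choose j) *\<^sub>R h (Suc j)) + (h 0 + (\<Sum>j\<le>n. of_nat (n choose Suc j) *\<^sub>R h (Suc j)))"
    by (simp add: sum.atMost_Suc_shift scaleR_add_left sum.distrib del: sum.atMost_Suc)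
  also have "h 0 + (\<Sum>j\<le>n. of_nat (n choose Suc j) *\<^sub>R h (Suc j)) = (\<Sum>j\<le>Suc n. of_nat (n choose j) *\<^sub>R h j)"
    by (simp only: sum.atMost_Suc_shift) simp
  also have "\<dots> = (\<Sum>j\<le>n. of_nat (n choose j) *\<^sub>R h j)"
    by simp
  finally show ?thesis by (simp add: scaleR_add_right sum.distrib algebra_simps)
qed

lemma derivative_tower_bilinear:
  assumes B: "bounded_bilinear B" and F: "derivative_tower I F" and G: "derivative_tower I G"
  shows "derivative_tower I (\<lambda>n s. \<Sum>j\<le>n. of_nat (n choose j) *\<^sub>R B (F j s) (G (n - j) s))"
  unfolding derivative_tower_def
proof (intro allI ballI)
  fix n s assume s: "s \<in> I"
  define h where "h j = B (F j s) (G (Suc n - j) s)" for j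
  have "((\<lambda>s. \<Sum>j\<le>n. of_nat (n choose j) *\<^sub>R B (F j s) (G (n - j) s)) has_vector_derivative
         (\<Sum>j\<le>n. of_nat (n choose j) *\<^sub>R (h (Suc j) + h j))) (at s)"
  proof (intro has_vector_derivative_sum bounded_linear.has_vector_derivative[OF bounded_linear_scaleR_right])
    fix j assume "j \<in> {..n}"
    then have "Suc (n - j) = Suc n - j" by auto
    moreover have "(F j has_vector_derivative F (Suc j) s) (at s)"
      "(G (n - j) has_vector_derivative G (Suc (n - j)) s) (at s)"
      using F G s unfolding derivative_tower_def by blast+
    ultimately show "((\<lambda>s. B (F j s) (G (n - j) s)) has_vector_derivative h (Suc j) + h j) (at s)"
      using bounded_bilinear.has_vector_derivative[OF B] unfolding h_def by (metis add.commute diff_Suc_Suc)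
  qed
  then show "((\<lambda>s. \<Sum>j\<le>n. of_nat (n choose j) *\<^sub>R B (F j s) (G (n - j) s)) has_vector_derivative
         (\<Sum>j\<le>Suc n. of_nat (Suc n choose j) *\<^sub>R B (F j s) (G (Suc n - j) s))) (at s)"
    unfolding h_def[symmetric] binomial_shift_sum[symmetric] .
qed

lemma pd_1_separable:
  fixes F :: "real \<times> real \<Rightarrow> 'a::real_normed_vector"
  assumes U: "open U" "p \<in> U" and F: "\<And>q. q \<in> U \<Longrightarrow> F q = c (fst q) *\<^sub>R G (snd q)"
    and c: "(c has_field_derivative c') (at (fst p))"
  shows "pd 1 F p = c' *\<^sub>R G (snd p)"
proof -
  let ?S = "(\<lambda>h. p + (h, 0)) -` U"
  have open_S: "open ?S" by (rule continuous_open_vimage[OF U(1)]) (intro continuous_intros)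
  have zero_S: "0 \<in> ?S" using U by (simp add: zero_prod_def[symmetric])
  have "((\<lambda>h. c (fst p + h)) has_field_derivative c') (at 0)"
    using c DERIV_shift[of c c' 0 "fst p"] by (simp add: add.commute)
  then have "((\<lambda>h. c (fst p + h) *\<^sub>R G (snd p)) has_vector_derivative c' *\<^sub>R G (snd p)) (at 0)"
    by (auto intro!: derivative_eq_intros)
  then have "((\<lambda>h. F (p + (h, 0))) has_vector_derivative c' *\<^sub>R G (snd p)) (at 0)"
    by (rule has_vector_derivative_transform_within_open[OF _ open_S zero_S]) (simp add: F)
  then show ?thesis unfolding pd_def by (simp add: vector_derivative_at)
qed

lemma pd_2_separable:
  fixes F :: "real \<times> real \<Rightarrow> 'a::real_normed_vector"
  assumes U: "open U" "p \<in> U" and F: "\<And>q. q \<in> U \<Longrightarrow> F q = c (fst q) *\<^sub>R G (snd q)"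
    and G: "(G has_vector_derivative G') (at (snd p))"
  shows "pd 2 F p = c (fst p) *\<^sub>R G'"
proof -
  let ?S = "(\<lambda>h. p + (0, h)) -` U"
  have open_S: "open ?S" by (rule continuous_open_vimage[OF U(1)]) (intro continuous_intros)
  have zero_S: "0 \<in> ?S" using U by (simp add: zero_prod_def[symmetric])
  have "((\<lambda>h. snd p + h) has_vector_derivative 1) (at 0)"
    by (auto intro!: derivative_eq_intros)
  from vector_diff_chain_at[OF this] G have "((\<lambda>h. G (snd p + h)) has_vector_derivative G') (at 0)"
    by (simp add: o_def)
  then have "((\<lambda>h. c (fst p) *\<^sub>R G (snd p + h)) has_vector_derivative c (fst p) *\<^sub>R G') (at 0)"
    by (auto intro!: derivative_eq_intros)
  then have "((\<lambda>h. F (p + (0, h))) has_vector_derivative c (fst p) *\<^sub>R G') (at 0)"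
    by (rule has_vector_derivative_transform_within_open[OF _ open_S zero_S]) (simp add: F)
  then show ?thesis unfolding pd_def by (simp add: vector_derivative_at)
qed

lemma biharmonic_curvature_ode_only_zero:
  fixes k k' k'' k''' :: "real \<Rightarrow> real"
  assumes I: "open I"
    and dk: "\<And>s. s \<in> I \<Longrightarrow> (k has_field_derivative k' s) (at s)"
    and dk': "\<And>s. s \<in> I \<Longrightarrow> (k' has_field_derivative k'' s) (at s)"
    and dk'': "\<And>s. s \<in> I \<Longrightarrow> (k'' has_field_derivative k''' s) (at s)"
    and ode1: "\<And>s. s \<in> I \<Longrightarrow> 3 * k s + 3 * k'' s + (k s)^3 = 0"
    and ode2: "\<And>s. s \<in> I \<Longrightarrow> k' s + k''' s = 0"
    and s: "s \<in> I"
  shows "k s = 0"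
proof (rule ccontr)
  have k_sq_k': "(k y)^2 * k' y = 0" if y: "y \<in> I" for y
  proof -
    have "((\<lambda>s. - k s - (k s)^3 / 3) has_field_derivative - k' y - (k y)^2 * k' y) (at y)"
      using dk[OF y] by (auto intro!: derivative_eq_intros simp: power2_eq_square)
    then have "(k'' has_field_derivative - k' y - (k y)^2 * k' y) (at y)"
      by (rule has_field_derivative_transform_within_open[OF _ I y]) (use ode1 in \<open>fastforce simp: field_simps\<close>)
    then have "k''' y = - k' y - (k y)^2 * k' y" using dk''[OF y] DERIV_unique by blast
    then show ?thesis using ode2[OF y] by simp
  qed
  assume nz: "k s \<noteq> 0"
  have "continuous_on I k"
    using dk by (intro continuous_at_imp_continuous_on) (auto intro: DERIV_isCont)
  then have W: "open (I \<inter> k -` (- {0}))" using I by (intro continuous_open_preimage) auto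
  have "k' y = 0" if "y \<in> I \<inter> k -` (- {0})" for y using k_sq_k'[of y] that by auto
  then have "k'' s = 0"
    using has_field_derivative_zero_if_constant_on_open[OF W, of s k'] s nz dk'[OF s] by auto
  with ode1[OF s] have "k s * (3 + (k s)^2) = 0" by (simp add: algebra_simps power3_eq_cube power2_eq_square)
  moreover have "3 + (k s)^2 > 0" by (simp add: add_pos_nonneg)
  ultimately show False using nz by simp
qed

subsection \<open>Cones over curves with a Sabban frame\<close>

locale sabban_frame =
  fixes I :: "real set" and \<sigma> \<sigma>' N :: "real \<Rightarrow> real^3" and \<kappa> \<kappa>' \<kappa>'' \<kappa>''' :: "real \<Rightarrow> real"
  assumes open_I: "open I"
    and unit_\<sigma>: "\<And>s. s \<in> I \<Longrightarrow> \<sigma> s \<bullet> \<sigma> s = 1"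
    and unit_\<sigma>': "\<And>s. s \<in> I \<Longrightarrow> \<sigma>' s \<bullet> \<sigma>' s = 1"
    and orth_\<sigma>_\<sigma>': "\<And>s. s \<in> I \<Longrightarrow> \<sigma> s \<bullet> \<sigma>' s = 0"
    and N_def: "\<And>s. s \<in> I \<Longrightarrow> N s = cross3 (\<sigma> s) (\<sigma>' s)"
    and deriv_\<sigma>: "\<And>s. s \<in> I \<Longrightarrow> (\<sigma> has_vector_derivative \<sigma>' s) (at s)"
    and deriv_\<sigma>': "\<And>s. s \<in> I \<Longrightarrow> (\<sigma>' has_vector_derivative (\<kappa> s *\<^sub>R N s - \<sigma> s)) (at s)"
    and deriv_N: "\<And>s. s \<in> I \<Longrightarrow> (N has_vector_derivative (- \<kappa> s *\<^sub>R \<sigma>' s)) (at s)"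
    and deriv_\<kappa>: "\<And>s. s \<in> I \<Longrightarrow> (\<kappa> has_field_derivative \<kappa>' s) (at s)"
    and deriv_\<kappa>': "\<And>s. s \<in> I \<Longrightarrow> (\<kappa>' has_field_derivative \<kappa>'' s) (at s)"
    and deriv_\<kappa>'': "\<And>s. s \<in> I \<Longrightarrow> (\<kappa>'' has_field_derivative \<kappa>''' s) (at s)"
begin

abbreviation "U \<equiv> {(0::real)<..} \<times> I"
abbreviation "g \<equiv> induced_metric (cone \<sigma>)"
abbreviation "\<phi> \<equiv> gauss_map (cone \<sigma>)"

lemma open_U: "open U" using open_I by (intro open_Times) auto

lemma unit_N: "s \<in> I \<Longrightarrow> N s \<bullet> N s = 1"
  using norm_cross_dot[of "\<sigma> s" "\<sigma>' s"] unit_\<sigma>[of s] unit_\<sigma>'[of s] orth_\<sigma>_\<sigma>'[of s] N_def[of s]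
  by (simp add: dot_square_norm[symmetric] power2_eq_square norm_eq_sqrt_inner)

lemma orth_\<sigma>_N: "s \<in> I \<Longrightarrow> \<sigma> s \<bullet> N s = 0" using N_def dot_cross_self by simp
lemma orth_\<sigma>'_N: "s \<in> I \<Longrightarrow> \<sigma>' s \<bullet> N s = 0" using N_def dot_cross_self by simp

lemmas frame_inner = unit_\<sigma> unit_\<sigma>' unit_N orth_\<sigma>_\<sigma>' orth_\<sigma>_N orth_\<sigma>'_N
  orth_\<sigma>_\<sigma>'[THEN trans[OF inner_commute]] orth_\<sigma>_N[THEN trans[OF inner_commute]]
  orth_\<sigma>'_N[THEN trans[OF inner_commute]]

lemma pd_1_cone: "q \<in> U \<Longrightarrow> pd 1 (cone \<sigma>) q = \<sigma> (snd q)"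
  using pd_1_separable[OF open_U, of q "cone \<sigma>" "\<lambda>t. t" \<sigma> 1] by (simp add: cone_def)

lemma pd_2_cone: "q \<in> U \<Longrightarrow> pd 2 (cone \<sigma>) q = fst q *\<^sub>R \<sigma>' (snd q)"
  using pd_2_separable[OF open_U, of q "cone \<sigma>" "\<lambda>t. t" \<sigma> "\<sigma>' (snd q)"] deriv_\<sigma> by (auto simp: cone_def)

lemma metric_cone: "q \<in> U \<Longrightarrow> g 1 1 q = 1 \<and> g 1 2 q = 0 \<and> g 2 1 q = 0 \<and> g 2 2 q = (fst q)^2"
  by (auto simp: induced_metric_def pd_1_cone pd_2_cone frame_inner power2_eq_square)

lemma pd_radial:
  fixes F :: "real \<times> real \<Rightarrow> real"
  assumes "q \<in> U" "\<And>q. q \<in> U \<Longrightarrow> F q = c (fst q)" "(c has_field_derivative c') (at (fst q))"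
  shows "pd 1 F q = c'" "pd 2 F q = 0"
  using pd_1_separable[OF open_U assms(1), of F c "\<lambda>_. 1" c'] pd_2_separable[OF open_U assms(1), of F c "\<lambda>_. 1" 0] assms
  by auto

lemma pd_metric_cone: assumes "q \<in> U"
  shows "pd 1 (g 1 1) q = 0" "pd 2 (g 1 1) q = 0" "pd 1 (g 1 2) q = 0" "pd 2 (g 1 2) q = 0"
    "pd 1 (g 2 1) q = 0" "pd 2 (g 2 1) q = 0" "pd 1 (g 2 2) q = 2 * fst q" "pd 2 (g 2 2) q = 0"
proof -
  have const: "((\<lambda>_. c) has_field_derivative 0) (at x)" for c x :: real by simp
  have square: "((\<lambda>t. t^2) has_field_derivative 2 * x) (at x)" for x :: real
    by (auto intro!: derivative_eq_intros)
  show "pd 1 (g 1 1) q = 0" "pd 2 (g 1 1) q = 0"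
    using pd_radial[OF assms, of "g 1 1" "\<lambda>_. 1", OF _ const] metric_cone by auto
  show "pd 1 (g 1 2) q = 0" "pd 2 (g 1 2) q = 0"
    using pd_radial[OF assms, of "g 1 2" "\<lambda>_. 0", OF _ const] metric_cone by auto
  show "pd 1 (g 2 1) q = 0" "pd 2 (g 2 1) q = 0"
    using pd_radial[OF assms, of "g 2 1" "\<lambda>_. 0", OF _ const] metric_cone by auto
  show "pd 1 (g 2 2) q = 2 * fst q" "pd 2 (g 2 2) q = 0"
    using pd_radial[OF assms, of "g 2 2" "\<lambda>t. t^2", OF _ square] metric_cone by auto
qed

lemma ginv_cone: assumes "q \<in> U"
  shows "ginv g 1 1 q = 1" "ginv g 1 2 q = 0" "ginv g 2 1 q = 0" "ginv g 2 2 q = 1 / (fst q)^2"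
  using metric_cone[OF assms] assms by (auto simp: ginv_def metric_det_def)

lemma christ_cone: assumes "q \<in> U"
  shows "christ g 1 1 1 q = 0" "christ g 1 1 2 q = 0" "christ g 1 2 1 q = 0"
    "christ g 1 2 2 q = - fst q" "christ g 2 1 1 q = 0" "christ g 2 1 2 q = 1 / fst q"
    "christ g 2 2 1 q = 1 / fst q" "christ g 2 2 2 q = 0"
  using assms by (auto simp: christ_def ginv_cone[OF assms] pd_metric_cone[OF assms] power2_eq_square)

lemma gauss_map_cone: "q \<in> U \<Longrightarrow> \<phi> q = N (snd q)"
proof -
  assume q: "q \<in> U"
  then have t: "fst q > 0" and s: "snd q \<in> I" by auto
  have "cross3 (pd 1 (cone \<sigma>) q) (pd 2 (cone \<sigma>) q) = fst q *\<^sub>R N (snd q)"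
    using q s by (simp add: pd_1_cone pd_2_cone cross_mult_right N_def)
  moreover have "norm (N (snd q)) = 1" using unit_N[OF s] by (simp add: norm_eq_sqrt_inner)
  ultimately show ?thesis using t by (simp add: gauss_map_def)
qed

lemma pd_gauss_map_cone: assumes "q \<in> U"
  shows "pd 1 \<phi> q = 0" "pd 2 \<phi> q = - \<kappa> (snd q) *\<^sub>R \<sigma>' (snd q)"
  using pd_1_separable[OF open_U assms, of \<phi> "\<lambda>_. 1" N 0] pd_2_separable[OF open_U assms, of \<phi> "\<lambda>_. 1" N]
    assms gauss_map_cone deriv_N by auto

lemma deriv_N': assumes s: "s \<in> I"
  shows "((\<lambda>s. - \<kappa> s *\<^sub>R \<sigma>' s) has_vector_derivative
     (\<kappa> s *\<^sub>R \<sigma> s - \<kappa>' s *\<^sub>R \<sigma>' s - (\<kappa> s)^2 *\<^sub>R N s)) (at s)"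
proof -
  have "((\<lambda>s. - \<kappa> s) has_field_derivative - \<kappa>' s) (at s)"
    using deriv_\<kappa>[OF s] by (auto intro: derivative_eq_intros)
  from has_vector_derivative_scaleR[OF this deriv_\<sigma>'[OF s]] show ?thesis
    by (simp add: algebra_simps power2_eq_square)
qed

lemma pd2_gauss_map_cone: assumes "q \<in> U"
  shows "pd 1 (pd 1 \<phi>) q = 0" "pd 2 (pd 1 \<phi>) q = 0" "pd 1 (pd 2 \<phi>) q = 0"
    "pd 2 (pd 2 \<phi>) q = \<kappa> (snd q) *\<^sub>R \<sigma> (snd q) - \<kappa>' (snd q) *\<^sub>R \<sigma>' (snd q) - (\<kappa> (snd q))^2 *\<^sub>R N (snd q)"
  using pd_1_separable[OF open_U assms, of "pd 1 \<phi>" "\<lambda>_. 0" N 0]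
    pd_2_separable[OF open_U assms, of "pd 1 \<phi>" "\<lambda>_. 0" N "- \<kappa> (snd q) *\<^sub>R \<sigma>' (snd q)"]
    pd_1_separable[OF open_U assms, of "pd 2 \<phi>" "\<lambda>_. 1" "\<lambda>s. - \<kappa> s *\<^sub>R \<sigma>' s" 0]
    pd_2_separable[OF open_U assms, of "pd 2 \<phi>" "\<lambda>_. 1" "\<lambda>s. - \<kappa> s *\<^sub>R \<sigma>' s"] assms
    pd_gauss_map_cone deriv_N' deriv_N by auto

lemma tension_cone: assumes "q \<in> U"
  shows "tension g \<phi> q = (1 / (fst q)^2) *\<^sub>R (\<kappa> (snd q) *\<^sub>R \<sigma> (snd q) - \<kappa>' (snd q) *\<^sub>R \<sigma>' (snd q))"
  using assms
  by (auto simp: tension_def cov_def ginv_cone[OF assms] christ_cone[OF assms] pd_gauss_map_cone[OF assms]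
      pd2_gauss_map_cone[OF assms] gauss_map_cone[OF assms] inner_diff_left inner_add_left frame_inner
      algebra_simps power2_eq_square)

lemma harmonic_if_geodesic: "(\<And>s. s \<in> I \<Longrightarrow> \<kappa> s = 0) \<Longrightarrow> harmonic_on g \<phi> U"
  unfolding harmonic_on_def
proof
  fix q assume flat: "\<And>s. s \<in> I \<Longrightarrow> \<kappa> s = 0" and q: "q \<in> U"
  then have s: "snd q \<in> I" by auto
  have "\<kappa>' (snd q) = 0"
    using has_field_derivative_zero_if_constant_on_open[OF open_I s, of \<kappa> 0] flat deriv_\<kappa>[OF s] by auto
  then show "tension g \<phi> q = 0" using tension_cone[OF q] flat[OF s] by simp
qed

lemma deriv_tension_profile: assumes s: "s \<in> I"
  shows "((\<lambda>s. \<kappa> s *\<^sub>R \<sigma> s - \<kappa>' s *\<^sub>R \<sigma>' s) has_vector_derivative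
    (2 * \<kappa>' s) *\<^sub>R \<sigma> s + (\<kappa> s - \<kappa>'' s) *\<^sub>R \<sigma>' s - (\<kappa> s * \<kappa>' s) *\<^sub>R N s) (at s)"
  by (rule has_vector_derivative_eq_rhs[OF has_vector_derivative_diff[OF
        has_vector_derivative_scaleR[OF deriv_\<kappa>[OF s] deriv_\<sigma>[OF s]]
        has_vector_derivative_scaleR[OF deriv_\<kappa>'[OF s] deriv_\<sigma>'[OF s]]]])
    (simp add: vec_eq_iff algebra_simps)

lemma deriv_tension_profile_tangential: assumes s: "s \<in> I"
  shows "((\<lambda>s. (2 * \<kappa>' s) *\<^sub>R \<sigma> s + (\<kappa> s - \<kappa>'' s) *\<^sub>R \<sigma>' s) has_vector_derivative
    (3 * \<kappa>'' s - \<kappa> s) *\<^sub>R \<sigma> s + (3 * \<kappa>' s - \<kappa>''' s) *\<^sub>R \<sigma>' s + ((\<kappa> s - \<kappa>'' s) * \<kappa> s) *\<^sub>R N s) (at s)"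
proof -
  have "((\<lambda>s. 2 * \<kappa>' s) has_field_derivative 2 * \<kappa>'' s) (at s)"
    using deriv_\<kappa>'[OF s] by (auto intro!: derivative_eq_intros)
  moreover have "((\<lambda>s. \<kappa> s - \<kappa>'' s) has_field_derivative \<kappa>' s - \<kappa>''' s) (at s)"
    using deriv_\<kappa>[OF s] deriv_\<kappa>''[OF s] by (auto intro!: derivative_eq_intros)
  ultimately show ?thesis
    by (rule_tac has_vector_derivative_eq_rhs[OF has_vector_derivative_add[OF
          has_vector_derivative_scaleR has_vector_derivative_scaleR]])
      (auto simp: vec_eq_iff algebra_simps intro: deriv_\<sigma>[OF s] deriv_\<sigma>'[OF s])
qed

lemma cov_1_tension_cone: assumes q: "q \<in> U"
  shows "cov 1 \<phi> (tension g \<phi>) q = (-2 / (fst q)^3) *\<^sub>R (\<kappa> (snd q) *\<^sub>R \<sigma> (snd q) - \<kappa>' (snd q) *\<^sub>R \<sigma>' (snd q))"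
proof -
  have t: "fst q > 0" and s: "snd q \<in> I" using q by auto
  have radial: "((\<lambda>t. 1 / t^2) has_field_derivative (-2 / (fst q)^3)) (at (fst q))"
    using t by (auto intro!: derivative_eq_intros simp: field_simps power2_eq_square power3_eq_cube)
  have "pd 1 (tension g \<phi>) q = (-2 / (fst q)^3) *\<^sub>R (\<kappa> (snd q) *\<^sub>R \<sigma> (snd q) - \<kappa>' (snd q) *\<^sub>R \<sigma>' (snd q))"
    by (rule pd_1_separable[OF open_U q _ radial]) (rule tension_cone)
  then show ?thesis using s by (simp add: cov_def gauss_map_cone[OF q] inner_diff_left frame_inner)
qed

lemma cov_2_tension_cone: assumes q: "q \<in> U"
  shows "cov 2 \<phi> (tension g \<phi>) q = (1 / (fst q)^2) *\<^sub>R ((2 * \<kappa>' (snd q)) *\<^sub>R \<sigma> (snd q) + (\<kappa> (snd q) - \<kappa>'' (snd q)) *\<^sub>R \<sigma>' (snd q))"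
proof -
  have t: "fst q > 0" and s: "snd q \<in> I" using q by auto
  have "pd 2 (tension g \<phi>) q = (1 / (fst q)^2) *\<^sub>R ((2 * \<kappa>' (snd q)) *\<^sub>R \<sigma> (snd q)
      + (\<kappa> (snd q) - \<kappa>'' (snd q)) *\<^sub>R \<sigma>' (snd q) - (\<kappa> (snd q) * \<kappa>' (snd q)) *\<^sub>R N (snd q))"
    by (rule pd_2_separable[OF open_U q _ deriv_tension_profile[OF s]]) (rule tension_cone)
  then show ?thesis using s t
    by (simp add: cov_def gauss_map_cone[OF q] inner_add_left inner_diff_left frame_inner)
      (simp add: vec_eq_iff field_simps)
qed

lemma cov_1_cov_1_tension_cone: assumes q: "q \<in> U"
  shows "cov 1 \<phi> (cov 1 \<phi> (tension g \<phi>)) q = (6 / (fst q)^4) *\<^sub>R (\<kappa> (snd q) *\<^sub>R \<sigma> (snd q) - \<kappa>' (snd q) *\<^sub>R \<sigma>' (snd q))"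
proof -
  have t: "fst q > 0" and s: "snd q \<in> I" using q by auto
  have radial: "((\<lambda>t. -2 / t^3) has_field_derivative (6 / (fst q)^4)) (at (fst q))"
    using t by (auto intro!: derivative_eq_intros simp: field_simps power2_eq_square power3_eq_cube power4_eq_xxxx)
  have "pd 1 (cov 1 \<phi> (tension g \<phi>)) q = (6 / (fst q)^4) *\<^sub>R (\<kappa> (snd q) *\<^sub>R \<sigma> (snd q) - \<kappa>' (snd q) *\<^sub>R \<sigma>' (snd q))"
    by (rule pd_1_separable[OF open_U q _ radial]) (rule cov_1_tension_cone)
  then show ?thesis using s by (simp add: cov_def gauss_map_cone[OF q] inner_diff_left frame_inner)
qed

lemma cov_2_cov_2_tension_cone: assumes q: "q \<in> U"
  shows "cov 2 \<phi> (cov 2 \<phi> (tension g \<phi>)) q = (1 / (fst q)^2) *\<^sub>R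
    ((3 * \<kappa>'' (snd q) - \<kappa> (snd q)) *\<^sub>R \<sigma> (snd q) + (3 * \<kappa>' (snd q) - \<kappa>''' (snd q)) *\<^sub>R \<sigma>' (snd q))"
proof -
  have t: "fst q > 0" and s: "snd q \<in> I" using q by auto
  have "pd 2 (cov 2 \<phi> (tension g \<phi>)) q = (1 / (fst q)^2) *\<^sub>R
    ((3 * \<kappa>'' (snd q) - \<kappa> (snd q)) *\<^sub>R \<sigma> (snd q) + (3 * \<kappa>' (snd q) - \<kappa>''' (snd q)) *\<^sub>R \<sigma>' (snd q)
      + ((\<kappa> (snd q) - \<kappa>'' (snd q)) * \<kappa> (snd q)) *\<^sub>R N (snd q))"
    by (rule pd_2_separable[OF open_U q _ deriv_tension_profile_tangential[OF s]]) (rule cov_2_tension_cone)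
  then show ?thesis using s t
    by (simp add: cov_def gauss_map_cone[OF q] inner_add_left frame_inner power2_eq_square)
      (simp add: vec_eq_iff field_simps)
qed

lemma bitension_cone_at_1: assumes s: "s \<in> I"
  shows "bitension g \<phi> (1, s) = (3 * \<kappa> s + 3 * \<kappa>'' s + (\<kappa> s)^3) *\<^sub>R \<sigma> s - (\<kappa>' s + \<kappa>''' s) *\<^sub>R \<sigma>' s"
proof -
  have q: "(1, s) \<in> U" using s by auto
  show ?thesis using s
    by (simp add: bitension_def trace_hess_def curvS2_def ginv_cone[OF q] christ_cone[OF q]
        pd_gauss_map_cone[OF q] tension_cone[OF q] cov_1_tension_cone[OF q] cov_2_tension_cone[OF q]
        cov_1_cov_1_tension_cone[OF q] cov_2_cov_2_tension_cone[OF q]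
        inner_diff_left inner_add_left inner_diff_right inner_add_right frame_inner)
      (simp add: vec_eq_iff algebra_simps power2_eq_square power3_eq_cube)
qed

lemma not_proper_biharmonic_gauss_map_cone: "\<not> proper_biharmonic_on g \<phi> U"
proof
  assume "proper_biharmonic_on g \<phi> U"
  then have biharmonic: "\<And>q. q \<in> U \<Longrightarrow> bitension g \<phi> q = 0" and "\<not> harmonic_on g \<phi> U"
    by (auto simp: proper_biharmonic_on_def biharmonic_on_def)
  have "3 * \<kappa> s + 3 * \<kappa>'' s + (\<kappa> s)^3 = 0 \<and> \<kappa>' s + \<kappa>''' s = 0" if s: "s \<in> I" for s
  proof -
    have "(3 * \<kappa> s + 3 * \<kappa>'' s + (\<kappa> s)^3) *\<^sub>R \<sigma> s - (\<kappa>' s + \<kappa>''' s) *\<^sub>R \<sigma>' s = 0"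
      using biharmonic[of "(1, s)"] bitension_cone_at_1[OF s] s by auto
    from arg_cong[OF this, of "\<lambda>v. v \<bullet> \<sigma> s"] arg_cong[OF this, of "\<lambda>v. v \<bullet> \<sigma>' s"] s show ?thesis
      by (simp add: inner_diff_left frame_inner)
  qed
  then have "\<kappa> s = 0" if "s \<in> I" for s
    using biharmonic_curvature_ode_only_zero[OF open_I deriv_\<kappa> deriv_\<kappa>' deriv_\<kappa>''] that by blast
  with harmonic_if_geodesic \<open>\<not> harmonic_on g \<phi> U\<close> show False by blast
qed

end

subsection \<open>The Sabban frame of a unit-speed spherical curve\<close>

lemma unit_speed_spherical_tower_inner:
  fixes F :: "nat \<Rightarrow> real \<Rightarrow> 'a::real_inner"
  assumes I: "open I" and F: "derivative_tower I F"
    and unit0: "\<And>s. s \<in> I \<Longrightarrow> F 0 s \<bullet> F 0 s = 1" and unit1: "\<And>s. s \<in> I \<Longrightarrow> F 1 s \<bullet> F 1 s = 1"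
    and s: "s \<in> I"
  shows "F 0 s \<bullet> F 1 s = 0" "F 1 s \<bullet> F 2 s = 0" "F 0 s \<bullet> F 2 s = -1"
proof -
  have d0: "(F 0 has_vector_derivative F 1 s) (at s)" and d1: "(F 1 has_vector_derivative F 2 s) (at s)"
    if "s \<in> I" for s
    using F that unfolding derivative_tower_def by (metis One_nat_def, metis One_nat_def numeral_2_eq_2)
  have orth01: "F 0 y \<bullet> F 1 y = 0" if y: "y \<in> I" for y
  proof -
    have "F 1 y \<bullet> F 0 y + F 0 y \<bullet> F 1 y = 0"
      by (rule has_field_derivative_zero_if_constant_on_open[OF I y, of "\<lambda>s. F 0 s \<bullet> F 0 s" 1])
        (use unit0 d0[of y] y in \<open>auto intro!: has_field_derivative_inner\<close>)
    then show ?thesis by (simp add: inner_commute)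
  qed
  then show "F 0 s \<bullet> F 1 s = 0" using s .
  have "F 2 s \<bullet> F 1 s + F 1 s \<bullet> F 2 s = 0"
    by (rule has_field_derivative_zero_if_constant_on_open[OF I s, of "\<lambda>s. F 1 s \<bullet> F 1 s" 1])
      (use unit1 d1[of s] s in \<open>auto intro!: has_field_derivative_inner\<close>)
  then show "F 1 s \<bullet> F 2 s = 0" by (simp add: inner_commute)
  have "F 1 s \<bullet> F 1 s + F 0 s \<bullet> F 2 s = 0"
    by (rule has_field_derivative_zero_if_constant_on_open[OF I s, of "\<lambda>s. F 0 s \<bullet> F 1 s" 0])
      (use d0[of s] d1[of s] s in \<open>auto simp: orth01 intro!: has_field_derivative_inner\<close>)
  then show "F 0 s \<bullet> F 2 s = -1" using unit1[OF s] by simp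
qed

lemma sabban_frame_of_unit_speed_spherical_curve:
  fixes \<sigma> :: "real \<Rightarrow> real^3"
  assumes I: "open I" and smooth: "smooth_on I \<sigma>"
    and unit: "\<forall>s\<in>I. norm (\<sigma> s) = 1" and unit_speed: "\<forall>s\<in>I. norm (vector_derivative \<sigma> (at s)) = 1"
  obtains \<kappa> \<kappa>' \<kappa>'' \<kappa>''' where
    "sabban_frame I \<sigma> (vderiv 1 \<sigma>) (\<lambda>s. cross3 (\<sigma> s) (vderiv 1 \<sigma> s)) \<kappa> \<kappa>' \<kappa>'' \<kappa>'''"
proof -
  define S where "S n = vderiv n \<sigma>" for n
  define N where "N = (\<lambda>s. cross3 (S 0 s) (S 1 s))"
  \<comment> \<open>Leibniz towers of the derivatives of \<open>N = \<sigma> \<times> \<sigma>'\<close> and of the geodesic curvature \<open>\<kappa> = \<sigma>'' \<bullet> N\<close>.\<close>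
  define NT where "NT n s = (\<Sum>j\<le>n. of_nat (n choose j) *\<^sub>R cross3 (S j s) (S (n - j + 1) s))" for n s
  define K where "K n s = (\<Sum>j\<le>n. of_nat (n choose j) *\<^sub>R (S (j + 2) s \<bullet> NT (n - j) s))" for n s
  have S: "derivative_tower I S"
    using smooth unfolding S_def smooth_on_iff_derivative_tower .
  have NT: "derivative_tower I NT"
    unfolding NT_def using derivative_tower_bilinear[OF bounded_bilinear_cross S derivative_tower_shift[OF S]] .
  have K: "derivative_tower I K"
    unfolding K_def using derivative_tower_bilinear[OF bounded_bilinear_inner derivative_tower_shift[OF S] NT] .
  have S0: "S 0 = \<sigma>" and S1: "S 1 = vderiv 1 \<sigma>" by (simp_all add: S_def)
  have unit_S: "S 0 s \<bullet> S 0 s = 1" "S 1 s \<bullet> S 1 s = 1" if "s \<in> I" for s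
    using unit unit_speed that by (simp_all add: S_def One_nat_def dot_square_norm)
  have inner_S: "S 0 s \<bullet> S 1 s = 0" "S 1 s \<bullet> S 2 s = 0" "S 0 s \<bullet> S 2 s = -1" if "s \<in> I" for s
    using unit_speed_spherical_tower_inner[OF I S _ _ that] unit_S by blast+
  have NT0: "NT 0 = N" by (simp add: NT_def N_def fun_eq_iff)
  have K0: "K 0 s = S 2 s \<bullet> N s" for s by (simp add: K_def NT0 numeral_2_eq_2)
  have S2: "S 2 s = K 0 s *\<^sub>R N s - S 0 s" if s: "s \<in> I" for s
    using orthonormal_cross_expansion[OF unit_S[OF s] inner_S(1)[OF s], of "S 2 s"] inner_S[OF s]
    unfolding K0 N_def by (simp add: inner_commute)
  have "NT 1 s = cross3 (S 0 s) (S 2 s)" for s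
    by (simp add: NT_def numeral_2_eq_2 One_nat_def)
  then have NT1: "NT 1 s = - K 0 s *\<^sub>R S 1 s" if s: "s \<in> I" for s
    using S2[OF s] cross_cross_right[of "S 0 s" "S 0 s" "S 1 s"] unit_S[OF s] inner_S(1)[OF s]
    by (simp add: N_def cross_mult_right Cross3.right_diff_distrib)
  have deriv: "(F n has_vector_derivative F (Suc n) s) (at s)"
    if "derivative_tower I F" "s \<in> I" for F :: "nat \<Rightarrow> real \<Rightarrow> real^3" and n s
    using that unfolding derivative_tower_def by blast
  have "sabban_frame I \<sigma> (vderiv 1 \<sigma>) (\<lambda>s. cross3 (\<sigma> s) (vderiv 1 \<sigma> s)) (K 0) (K 1) (K 2) (K 3)"
  proof
    fix s assume s: "s \<in> I"
    show "(vderiv 1 \<sigma> has_vector_derivative K 0 s *\<^sub>R cross3 (\<sigma> s) (vderiv 1 \<sigma> s) - \<sigma> s) (at s)"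
      using deriv[OF S s, of 1] S2[OF s] by (simp add: S_def N_def numeral_2_eq_2)
    show "((\<lambda>s. cross3 (\<sigma> s) (vderiv 1 \<sigma> s)) has_vector_derivative - K 0 s *\<^sub>R vderiv 1 \<sigma> s) (at s)"
      using deriv[OF NT s, of 0] NT1[OF s] by (simp add: NT0 N_def S_def One_nat_def)
    show "(K 0 has_field_derivative K 1 s) (at s)" "(K 1 has_field_derivative K 2 s) (at s)"
      "(K 2 has_field_derivative K 3 s) (at s)"
      using derivative_tower_field_derivative[OF K s] by (simp_all add: numeral_eq_Suc One_nat_def)
  qed (use I unit_S inner_S S0 S1 deriv[OF S, of _ 0] in \<open>auto simp: One_nat_def\<close>)
  then show thesis using that by blast
qed

theorem theorem4p4:
  fixes \<sigma> :: "real \<Rightarrow> real^3" and I :: "real set"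
  assumes "open I" and "is_interval I"
    and "smooth_on I \<sigma>"
    and "\<forall>s\<in>I. norm (\<sigma> s) = 1"
    and "\<forall>s\<in>I. norm (vector_derivative \<sigma> (at s)) = 1"
  shows "\<not> proper_biharmonic_on (induced_metric (cone \<sigma>)) (gauss_map (cone \<sigma>)) ({0<..} \<times> I)"
proof -
  obtain \<kappa> \<kappa>' \<kappa>'' \<kappa>''' where
    "sabban_frame I \<sigma> (vderiv 1 \<sigma>) (\<lambda>s. cross3 (\<sigma> s) (vderiv 1 \<sigma> s)) \<kappa> \<kappa>' \<kappa>'' \<kappa>'''"
    using sabban_frame_of_unit_speed_spherical_curve[OF assms(1,3-5)] .
  then show ?thesis by (rule sabban_frame.not_proper_biharmonic_gauss_map_cone)
qed

end
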